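(* Let $0<\Delta\le1$ and $T=\frac{\lambda_1}{\Delta}\ln\frac{1}{\Delta}$, and use the quantizer $q_r$ with variable-length encoding. There exist constants $C_2,C_3>0$, independent of $P$ and of the feedback rates (and of $\Delta$), such that for all $P>0$ $$\mathbb{E}[r_{\rm loss}]\le\log_2\Big(1+C_2P\,2^{-\min\{R_{r,{\rm VLE},1},R_{r,{\rm VLE},2}\}}\Big)\le C_3P\,2^{-\min\{R_{r,{\rm VLE},1},R_{r,{\rm VLE},2}\}}.$$
   Context: $H_1,H_2$ are independent exponential random variables with means $\lambda_1\ge\lambda_2>0$ (density $e^{-x/\lambda_i}/\lambda_i$, $x>0$); $P>0$ is the total power. For $a\ge b\ge0$ with $a>0$ let $A(a,b)=\frac{2b}{\sqrt{(a+b)^2+4ab^2P}+a+b}$. Full-CSI maximum minimum rate: $r_{\max}=\log_2(1+PH_1A(H_1,H_2))$ if $H_1\ge H_2$ and $r_{\max}=\log_2(1+PH_2A(H_2,H_1))$ if $H_1<H_2$. Quantizer with $\Delta>0$, $T\ge0$: $q_r(x)=\lfloor x/\Delta\rfloor\Delta$ for $x\le T\Delta$, $q_r(x)=T\Delta$ for $x>T\Delta$. Let $a_i=q_r(H_i)$; if $a_1\ge a_2$ let $(s,w)=(1,2)$, otherwise $(s,w)=(2,1)$. $\alpha_q=A(a_s,a_w)$ if $a_1,a_2>0$, else $\alpha_q=0$. Adapted rates: $r_{s,q}=\log_2(1+P\alpha_qa_s)$, $r_{w,q}=\log_2\big(1+\frac{Pa_w(1-\alpha_q)}{Pa_w\alpha_q+1}\big)$.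 Rate loss: $r_{\rm loss}=r_{\max}-\min\{r_{1,q},r_{2,q}\}$. Variable-length encoding: the quantization index $n$ (with $q_r(x)=n\Delta$) is sent with the $n$-th binary string in the list $0,1,00,01,10,11,000,\dots$, of length $\lfloor\log_2(n+2)\rfloor$. The feedback rate of Receiver $i$ is the expected codeword length $R_{r,{\rm VLE},i}=\mathbb{E}[\ell(H_i)]$, where $\ell(x)=\lfloor\log_2(\lfloor x/\Delta\rfloor+2)\rfloor$ for $x\le T\Delta$ and $\ell(x)=\lfloor\log_2(T+2)\rfloor$ for $x>T\Delta$. *)

theory Defs
  imports "HOL-Probability.Probability"
begin

definition alphaA :: "real \<Rightarrow> real \<Rightarrow> real \<Rightarrow> real" where
  "alphaA P a b = 2 * b / (sqrt ((a + b)^2 + 4 * a * b^2 * P) + a + b)"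

definition r_max :: "real \<Rightarrow> real \<Rightarrow> real \<Rightarrow> real" where
  "r_max P h1 h2 = (if h1 \<ge> h2 then log 2 (1 + P * h1 * alphaA P h1 h2)
                    else log 2 (1 + P * h2 * alphaA P h2 h1))"

definition q_r :: "real \<Rightarrow> real \<Rightarrow> real \<Rightarrow> real" where
  "q_r Delta T x = (if x \<le> T * Delta then of_int \<lfloor>x / Delta\<rfloor> * Delta else T * Delta)"

definition min_rate_q :: "real \<Rightarrow> real \<Rightarrow> real \<Rightarrow> real \<Rightarrow> real \<Rightarrow> real" where
  "min_rate_q P Delta T h1 h2 =
     (let a1 = q_r Delta T h1; a2 = q_r Delta T h2;
          as = (if a1 \<ge> a2 then a1 else a2);
          aw = (if a1 \<ge> a2 then a2 else a1);
          \<alpha> = (if a1 > 0 \<and> a2 > 0 then alphaA P as aw else 0);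
          rs = log 2 (1 + P * \<alpha> * as);
          rw = log 2 (1 + P * aw * (1 - \<alpha>) / (P * aw * \<alpha> + 1))
      in min rs rw)"

definition r_loss :: "real \<Rightarrow> real \<Rightarrow> real \<Rightarrow> real \<Rightarrow> real \<Rightarrow> real" where
  "r_loss P Delta T h1 h2 = r_max P h1 h2 - min_rate_q P Delta T h1 h2"

definition vle_len :: "real \<Rightarrow> real \<Rightarrow> real \<Rightarrow> real" where
  "vle_len Delta T x = (if x \<le> T * Delta
      then of_int \<lfloor>log 2 (of_int \<lfloor>x / Delta\<rfloor> + 2)\<rfloor>
      else of_int \<lfloor>log 2 (T + 2)\<rfloor>)"

text \<open>Distribution of an exponential random variable with mean lam.\<close>
definition exp_dist :: "real \<Rightarrow> real measure" where
  "exp_dist lam = density lborel (exponential_density (1 / lam))"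

end

theory Submission
  imports Defs
begin

text \<open>With the power split \<open>alphaA\<close> both receivers see the same SINR \<open>w(a, b)\<close>, the positive
  root of \<open>w (a + b) + b w\<^sup>2 = P a b\<close>. Shrinking the gains to \<open>a' \<ge> c a\<close>, \<open>b' \<ge> c b\<close> shrinks
  \<open>w\<close> by at most the factor \<open>c\<close>, and this gives
  \<open>1 + w(a, b) \<le> (1 + w(a', b')) (1 + P ((a - a') + (b - b')))\<close>: the rate loss is at most
  \<open>log 2 (1 + P e)\<close>, \<open>e\<close> the total quantization error. By Jensen the expected loss is at most
  \<open>log 2 (1 + P E e)\<close>, and the threshold \<open>T\<close> keeps the overload part of \<open>E e\<close> below \<open>\<Delta> lam\<close>,
  so \<open>E e = O(\<Delta>)\<close>. Jensen again bounds each feedback rate by \<open>log 2 (lam / \<Delta> + 2)\<close>, i.e.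
  \<open>\<Delta> = O(2 powr - R)\<close>; the last inequality is \<open>log 2 (1 + x) \<le> x / ln 2\<close>.\<close>

section \<open>The common SINR under the optimal power split\<close>

definition sinr :: "real \<Rightarrow> real \<Rightarrow> real \<Rightarrow> real" where
  "sinr P a b = P * a * alphaA P a b"

lemma alphaA_quadratic:
  assumes "a > 0" "b > 0" "P > 0"
  shows "alphaA P a b * (a + b) + P * a * b * (alphaA P a b)^2 = b"
proof -
  define S where "S = sqrt ((a + b)^2 + 4 * a * b^2 * P)"
  define D where "D = S + a + b"
  define al where "al = alphaA P a b"
  have S2: "S^2 = (a + b)^2 + 4 * a * b^2 * P" and "S \<ge> 0"
    unfolding S_def using assms by simp_all
  then have D0: "D > 0" unfolding D_def using assms by linarith
  have aD: "al * D = 2 * b" unfolding al_def alphaA_def D_def S_def[symmetric] using D0 D_def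
    by (simp add: field_simps)
  have "(al * (a + b) + P * a * b * al^2) * D^2 = (a + b) * (al * D) * D + P * a * b * (al * D)^2"
    by (simp add: algebra_simps power2_eq_square)
  also have "\<dots> = (a + b) * (2 * b) * (S + a + b) + P * a * b * (2 * b)^2"
    unfolding aD by (simp add: D_def)
  also have "\<dots> = b * D^2" unfolding D_def using S2
    by (simp add: algebra_simps power2_eq_square power3_eq_cube)
  finally show ?thesis using D0 unfolding al_def by simp
qed

lemma sinr_quadratic:
  assumes "a > 0" "b > 0" "P > 0"
  shows "sinr P a b * (a + b) + b * (sinr P a b)^2 = P * a * b"
proof -
  have "sinr P a b * (a + b) + b * (sinr P a b)^2
      = P * a * (alphaA P a b * (a + b) + P * a * b * (alphaA P a b)^2)"
    unfolding sinr_def by (simp add: algebra_simps power2_eq_square)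
  then show ?thesis using alphaA_quadratic[OF assms] by simp
qed

lemma alphaA_pos: "a > 0 \<Longrightarrow> b > 0 \<Longrightarrow> P > 0 \<Longrightarrow> alphaA P a b > 0"
  unfolding alphaA_def by (intro divide_pos_pos) (auto intro: add_nonneg_pos)

lemma sinr_pos: "a > 0 \<Longrightarrow> b > 0 \<Longrightarrow> P > 0 \<Longrightarrow> sinr P a b > 0"
  unfolding sinr_def using alphaA_pos by simp

lemma sinr_zero_left [simp]: "sinr P 0 b = 0"
  unfolding sinr_def by simp

lemma sinr_zero_right [simp]: "sinr P a 0 = 0"
  unfolding sinr_def alphaA_def by simp

lemma sinr_nonneg: "a \<ge> 0 \<Longrightarrow> b \<ge> 0 \<Longrightarrow> P > 0 \<Longrightarrow> sinr P a b \<ge> 0"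
  using sinr_pos[of a b P] by (cases "a = 0"; cases "b = 0") auto

lemma sinr_le:
  assumes "a > 0" "b > 0" "P > 0"
  shows "sinr P a b \<le> P * a" "sinr P a b \<le> P * b"
proof -
  let ?w = "sinr P a b"
  have "?w * (a + b) \<le> P * a * b"
    using sinr_quadratic[OF assms] assms by (smt (verit) mult_nonneg_nonneg zero_le_power2)
  moreover have "?w * b \<ge> 0" "?w * a \<ge> 0" using sinr_pos[OF assms] assms by auto
  ultimately have "a * ?w \<le> a * (P * b)" "b * ?w \<le> b * (P * a)"
    by (simp_all add: algebra_simps)
  then show "?w \<le> P * a" "?w \<le> P * b"
    using assms by (simp_all add: mult_le_cancel_left_pos mult.commute)
qed

text \<open>By the quadratic equation, \<open>w = sinr P a b\<close> is the unique positive root of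
  \<open>P / w = 1 / b + (1 + w) / a\<close>, whose right-hand side is decreasing in \<open>a\<close> and \<open>b\<close>.\<close>
lemma sinr_scaled_le:
  assumes pos: "a > 0" "b > 0" "a' > 0" "b' > 0" "P > 0" and c: "0 < c" "c \<le> 1"
    and le: "c * a \<le> a'" "c * b \<le> b'"
  shows "c * sinr P a b \<le> sinr P a' b'"
proof (rule ccontr)
  let ?w = "sinr P a b" and ?v = "sinr P a' b'"
  assume "\<not> ?thesis"
  then have lt: "?v < c * ?w" by simp
  have w0: "?w > 0" "?v > 0" using sinr_pos pos by auto
  have eq: "P / ?w = 1 / b + (1 + ?w) / a"
    using sinr_quadratic[of a b P] w0 pos by (simp add: field_simps power2_eq_square)
  have "1 / b' + (1 + c * ?w) / a' \<le> 1 / (c * b) + (1 + ?w) / (c * a)"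
  proof (rule add_mono)
    show "1 / b' \<le> 1 / (c * b)" using pos c le by (intro divide_left_mono) auto
    have "(1 + c * ?w) / a' \<le> (1 + ?w) / a'"
      using pos c w0 by (intro divide_right_mono) (auto simp: mult_left_le_one_le)
    also have "\<dots> \<le> (1 + ?w) / (c * a)" using pos c le w0 by (intro divide_left_mono) auto
    finally show "(1 + c * ?w) / a' \<le> (1 + ?w) / (c * a)" .
  qed
  also have "\<dots> = (1 / c) * (1 / b + (1 + ?w) / a)" using pos c by (simp add: field_simps)
  also have "\<dots> = P / (c * ?w)" unfolding eq[symmetric] by simp
  finally have "1 / b' + (1 + c * ?w) / a' \<le> P / (c * ?w)" .
  then have "(1 / b' + (1 + c * ?w) / a') * (c * ?w * a' * b') \<le> P / (c * ?w) * (c * ?w * a' * b')"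
    using pos c w0 by (intro mult_right_mono) auto
  moreover have "(1 / b' + (1 + c * ?w) / a') * (c * ?w * a' * b') = c * ?w * (a' + b') + b' * (c * ?w)^2"
    using pos by (simp add: field_simps power2_eq_square)
  moreover have "P / (c * ?w) * (c * ?w * a' * b') = P * a' * b'"
    using c w0 by (simp add: field_simps)
  ultimately have "c * ?w * (a' + b') + b' * (c * ?w)^2 \<le> P * a' * b'" by simp
  moreover have "?v * (a' + b') + b' * ?v^2 < c * ?w * (a' + b') + b' * (c * ?w)^2"
    using lt w0 pos by (intro add_strict_mono mult_strict_left_mono power_strict_mono) auto
  ultimately show False using sinr_quadratic[of a' b' P] pos by simp
qed

lemma sinr_mono:
  assumes "P > 0" "0 \<le> a'" "a' \<le> a" "0 \<le> b'" "b' \<le> b"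
  shows "sinr P a' b' \<le> sinr P a b"
proof (cases "a' = 0 \<or> b' = 0")
  case True
  then show ?thesis using sinr_nonneg assms by auto
next
  case False
  then show ?thesis using sinr_scaled_le[of a' b' a b P 1] assms by simp
qed

text \<open>With \<open>c = min (a'/a) (b'/b)\<close> one has \<open>1 + w \<le> (1 + c w) (1 + (1 - c) w)\<close>, and the lost part
  \<open>(1 - c) w\<close> of the SINR is paid for by the lost channel gain.\<close>
lemma one_plus_sinr_le_mult_pos:
  assumes P: "P > 0" and pos: "a' > 0" "b' > 0" and le: "a' \<le> a" "b' \<le> b"
  shows "1 + sinr P a b \<le> (1 + sinr P a' b') * (1 + P * ((a - a') + (b - b')))"
proof -
  let ?w = "sinr P a b" and ?v = "sinr P a' b'"
  have a0: "a > 0" and b0: "b > 0" using pos le by auto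
  define c where "c = min (a' / a) (b' / b)"
  have c: "0 < c" "c \<le> 1" unfolding c_def using pos le a0 b0 by (auto simp: min_le_iff_disj)
  have "c * a \<le> a'" "c * b \<le> b'"
    unfolding c_def using a0 b0 by (auto simp: min_def field_simps)
  then have cv: "c * ?w \<le> ?v" using sinr_scaled_le pos a0 b0 P c by blast
  have w0: "?w > 0" and v0: "?v > 0" using sinr_pos a0 b0 pos P by auto
  have "1 - c \<le> (1 - a' / a) + (1 - b' / b)"
    unfolding c_def using a0 b0 le by (auto simp: min_def)
  then have "(1 - c) * ?w \<le> (1 - a' / a) * ?w + (1 - b' / b) * ?w"
    using w0 by (metis distrib_right less_imp_le mult_right_mono)
  also have "\<dots> \<le> (1 - a' / a) * (P * a) + (1 - b' / b) * (P * b)"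
    using sinr_le[OF a0 b0 P] le a0 b0 by (intro add_mono mult_left_mono) auto
  also have "\<dots> = P * ((a - a') + (b - b'))" using a0 b0 by (simp add: field_simps)
  finally have lost: "(1 - c) * ?w \<le> P * ((a - a') + (b - b'))" .
  have "1 + ?w \<le> (1 + c * ?w) * (1 + (1 - c) * ?w)"
    using c w0 by (simp add: algebra_simps power2_eq_square)
  also have "\<dots> \<le> (1 + ?v) * (1 + P * ((a - a') + (b - b')))"
    using cv lost c w0 v0 by (intro mult_mono) auto
  finally show ?thesis .
qed

lemma log_one_plus_sinr_diff:
  assumes P: "P > 0" and "0 \<le> a'" "a' \<le> a" "0 \<le> b'" "b' \<le> b"
  shows "0 \<le> log 2 (1 + sinr P a b) - log 2 (1 + sinr P a' b')"
    and "log 2 (1 + sinr P a b) - log 2 (1 + sinr P a' b') \<le> log 2 (1 + P * ((a - a') + (b - b')))"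
proof -
  let ?w = "sinr P a b" and ?v = "sinr P a' b'" and ?d = "P * ((a - a') + (b - b'))"
  have w0: "?w \<ge> 0" "?v \<ge> 0" and d0: "?d \<ge> 0" using sinr_nonneg assms by auto
  have "1 + ?w \<le> (1 + ?v) * (1 + ?d)"
  proof (cases "a' = 0 \<or> b' = 0")
    case True
    have "?w \<le> ?d"
    proof (cases "a = 0 \<or> b = 0")
      case False
      then have "?w \<le> P * a" "?w \<le> P * b" using sinr_le[of a b P] assms by auto
      moreover have "?d = P * (a - a') + P * (b - b')" "P * (a - a') \<ge> 0" "P * (b - b') \<ge> 0"
        using assms by (simp_all add: distrib_left)
      ultimately show ?thesis using True by auto
    qed (use d0 in auto)
    then show ?thesis using True by auto
  next
    case False
    then show ?thesis using one_plus_sinr_le_mult_pos assms by auto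
  qed
  then have "log 2 (1 + ?w) \<le> log 2 ((1 + ?v) * (1 + ?d))"
    using w0 d0 by simp
  also have "\<dots> = log 2 (1 + ?v) + log 2 (1 + ?d)"
    using w0 d0 by (simp add: log_mult)
  finally have "log 2 (1 + ?w) \<le> log 2 (1 + ?v) + log 2 (1 + ?d)" .
  then show "log 2 (1 + ?w) - log 2 (1 + ?v) \<le> log 2 (1 + ?d)" by simp
  show "0 \<le> log 2 (1 + ?w) - log 2 (1 + ?v)" using sinr_mono assms w0 by simp
qed

section \<open>Quantization and rate loss\<close>

lemma r_max_eq_sinr:
  "r_max P h1 h2 = log 2 (1 + (if h1 \<ge> h2 then sinr P h1 h2 else sinr P h2 h1))"
  unfolding r_max_def sinr_def by (simp add: mult.assoc)

lemma min_rate_q_eq_sinr: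
  assumes P: "P > 0" and a: "q_r Delta T h1 \<ge> 0" "q_r Delta T h2 \<ge> 0"
  shows "min_rate_q P Delta T h1 h2 =
    (let a1 = q_r Delta T h1; a2 = q_r Delta T h2 in
       log 2 (1 + (if a1 \<ge> a2 then sinr P a1 a2 else sinr P a2 a1)))"
proof -
  define a1 where "a1 = q_r Delta T h1"
  define a2 where "a2 = q_r Delta T h2"
  define as where "as = (if a1 \<ge> a2 then a1 else a2)"
  define aw where "aw = (if a1 \<ge> a2 then a2 else a1)"
  have g: "(if a1 \<ge> a2 then sinr P a1 a2 else sinr P a2 a1) = sinr P as aw"
    unfolding as_def aw_def by simp
  have mr: "min_rate_q P Delta T h1 h2 =
     (let \<alpha> = (if a1 > 0 \<and> a2 > 0 then alphaA P as aw else 0)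
      in min (log 2 (1 + P * \<alpha> * as)) (log 2 (1 + P * aw * (1 - \<alpha>) / (P * aw * \<alpha> + 1))))"
    unfolding min_rate_q_def a1_def a2_def as_def aw_def Let_def by simp
  show ?thesis
  proof (cases "a1 > 0 \<and> a2 > 0")
    case True
    then have p: "as > 0" "aw > 0" unfolding as_def aw_def by auto
    define al where "al = alphaA P as aw"
    have al0: "al > 0" unfolding al_def using alphaA_pos[OF p P] .
    have "(1 + P * al * as) * (P * aw * al + 1) = 1 + P * (al * (as + aw) + P * as * aw * al^2)"
      by (simp add: algebra_simps power2_eq_square)
    also have "\<dots> = 1 + P * aw" using alphaA_quadratic[OF p P] unfolding al_def by simp
    finally have f: "(1 + P * al * as) * (P * aw * al + 1) = 1 + P * aw" .
    have pos: "P * aw * al + 1 > 0" using P p al0 by (simp add: add_pos_pos)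
    have "1 + P * aw * (1 - al) / (P * aw * al + 1) = (1 + P * aw) / (P * aw * al + 1)"
      using pos by (simp add: field_simps)
    also have "\<dots> = 1 + P * al * as" using f pos by (simp add: field_simps)
    finally have rw: "1 + P * aw * (1 - al) / (P * aw * al + 1) = 1 + P * al * as" .
    show ?thesis unfolding mr using True g rw
      by (simp add: Let_def al_def[symmetric] a1_def[symmetric] a2_def[symmetric] sinr_def
          mult.commute mult.left_commute)
  next
    case False
    then have "aw = 0" using a unfolding as_def aw_def a1_def a2_def by auto
    then show ?thesis unfolding mr using g False
      by (auto simp: Let_def a1_def[symmetric] a2_def[symmetric])
  qed
qed

lemma q_r_bounds:
  assumes D: "Delta > 0" and T: "T \<ge> 0" and x: "x \<ge> 0"
  shows "0 \<le> q_r Delta T x" "q_r Delta T x \<le> x"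
    "x - q_r Delta T x \<le> Delta + max 0 (x - T * Delta)"
proof -
  have "x / Delta < of_int \<lfloor>x / Delta\<rfloor> + 1" by linarith
  then have "x - of_int \<lfloor>x / Delta\<rfloor> * Delta < Delta" using D by (simp add: divide_less_eq algebra_simps)
  moreover have "of_int \<lfloor>x / Delta\<rfloor> * Delta \<le> x"
    using D by (metis of_int_floor_le pos_le_divide_eq)
  ultimately show "0 \<le> q_r Delta T x" "q_r Delta T x \<le> x"
    "x - q_r Delta T x \<le> Delta + max 0 (x - T * Delta)"
    using D T x unfolding q_r_def by auto
qed

lemma q_r_mono:
  assumes D: "Delta > 0" and T: "T \<ge> 0" and x: "x \<ge> 0" "x \<le> y"
  shows "q_r Delta T x \<le> q_r Delta T y"
proof -
  have "\<lfloor>x / Delta\<rfloor> \<le> \<lfloor>y / Delta\<rfloor>" using D x by (intro floor_mono divide_right_mono) auto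
  then have "of_int \<lfloor>x / Delta\<rfloor> * Delta \<le> of_int \<lfloor>y / Delta\<rfloor> * Delta" using D by simp
  then show ?thesis using q_r_bounds(2)[OF D T x(1)] x unfolding q_r_def by auto
qed

lemma r_loss_bounds:
  assumes P: "P > 0" and D: "Delta > 0" and T: "T \<ge> 0" and h: "h1 \<ge> 0" "h2 \<ge> 0"
  shows "0 \<le> r_loss P Delta T h1 h2"
    "r_loss P Delta T h1 h2 \<le> log 2 (1 + P * ((h1 - q_r Delta T h1) + (h2 - q_r Delta T h2)))"
proof -
  let ?q = "q_r Delta T"
  note q1 = q_r_bounds[OF D T h(1)] and q2 = q_r_bounds[OF D T h(2)]
  have "0 \<le> r_loss P Delta T h1 h2 \<and>
    r_loss P Delta T h1 h2 \<le> log 2 (1 + P * ((h1 - ?q h1) + (h2 - ?q h2)))"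
  proof (cases "h2 \<le> h1")
    case True
    then have "?q h2 \<le> ?q h1" using q_r_mono[OF D T h(2)] by simp
    then have "r_loss P Delta T h1 h2 = log 2 (1 + sinr P h1 h2) - log 2 (1 + sinr P (?q h1) (?q h2))"
      unfolding r_loss_def r_max_eq_sinr min_rate_q_eq_sinr[OF P q1(1) q2(1)] using True
      by (simp add: Let_def)
    then show ?thesis using log_one_plus_sinr_diff[OF P q1(1,2) q2(1,2)] by simp
  next
    case False
    then have "?q h1 \<le> ?q h2" using q_r_mono[OF D T h(1)] by simp
    then have "r_loss P Delta T h1 h2 = log 2 (1 + sinr P h2 h1) - log 2 (1 + sinr P (?q h2) (?q h1))"
      unfolding r_loss_def r_max_eq_sinr min_rate_q_eq_sinr[OF P q1(1) q2(1)] using False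
      by (auto simp: Let_def)
    then show ?thesis using log_one_plus_sinr_diff[OF P q2(1,2) q1(1,2)] by (simp add: add.commute)
  qed
  then show "0 \<le> r_loss P Delta T h1 h2"
    "r_loss P Delta T h1 h2 \<le> log 2 (1 + P * ((h1 - ?q h1) + (h2 - ?q h2)))" by auto
qed

lemma vle_len_bounds:
  assumes D: "Delta > 0" and T: "T \<ge> 0" and x: "x \<ge> 0"
  shows "0 \<le> vle_len Delta T x" "vle_len Delta T x \<le> log 2 (x / Delta + 2)"
proof -
  have xd: "0 \<le> x / Delta" using D x by simp
  then have fl: "0 \<le> \<lfloor>x / Delta\<rfloor>" "of_int \<lfloor>x / Delta\<rfloor> \<le> x / Delta" by simp_all
  have "(1::real) \<le> of_int \<lfloor>x / Delta\<rfloor> + 2" using fl(1) by simp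
  then show "0 \<le> vle_len Delta T x"
    using T unfolding vle_len_def by auto
  have "of_int \<lfloor>log 2 (of_int \<lfloor>x / Delta\<rfloor> + 2)\<rfloor> \<le> log 2 (x / Delta + 2)"
  proof -
    have "log 2 (of_int \<lfloor>x / Delta\<rfloor> + 2) \<le> log 2 (x / Delta + 2)"
      using fl by (intro log_mono) linarith+
    then show ?thesis using of_int_floor_le order_trans by blast
  qed
  moreover have "of_int \<lfloor>log 2 (T + 2)\<rfloor> \<le> log 2 (x / Delta + 2)" if "T * Delta < x"
  proof -
    have "T < x / Delta" using that D by (simp add: less_divide_eq)
    then have "log 2 (T + 2) \<le> log 2 (x / Delta + 2)" using T by simp
    then show ?thesis using of_int_floor_le order_trans by blast
  qed
  ultimately show "vle_len Delta T x \<le> log 2 (x / Delta + 2)"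
    unfolding vle_len_def by auto
qed

section \<open>Jensen's inequality for the logarithm and product measures\<close>

lemma log_le_tangent:
  assumes "y > 0" "c > 0"
  shows "log 2 y \<le> log 2 c + (y - c) / (c * ln 2)"
proof -
  have "ln (y / c) \<le> y / c - 1" using assms by (intro ln_le_minus_one) simp
  then have "ln y - ln c \<le> (y - c) / c" using assms by (simp add: ln_div diff_divide_distrib)
  then have "(ln y - ln c) / ln 2 \<le> ((y - c) / c) / ln 2" by (intro divide_right_mono) simp_all
  also have "((y - c) / c) / ln 2 = (y - c) / (c * ln 2)" by simp
  finally show ?thesis by (simp add: log_def diff_divide_distrib)
qed

lemma two_powr_neg_ge:
  assumes "R \<le> log 2 (lam / Delta + 2)" "lam > 0" "0 < Delta" "Delta \<le> 1"
  shows "Delta / (lam + 2) \<le> 2 powr (- R)"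
proof -
  have "Delta / (lam + 2) \<le> 1 / (lam / Delta + 2)"
    using assms by (simp add: field_simps)
  also have "\<dots> = 2 powr (- log 2 (lam / Delta + 2))"
    using assms by (simp add: powr_minus add_pos_pos divide_inverse)
  also have "\<dots> \<le> 2 powr (- R)" using assms(1) by (intro powr_mono) auto
  finally show ?thesis .
qed

lemma log2_one_plus_le: "0 \<le> x \<Longrightarrow> log 2 (1 + x) \<le> x / ln 2"
  unfolding log_def by (intro divide_right_mono ln_add_one_self_le_self) auto

text \<open>Jensen's inequality for the concave \<open>log 2\<close>, obtained by integrating its tangent at the mean
  of \<open>f\<close>; the tangent also dominates \<open>g\<close>, which gives integrability of \<open>g\<close>.\<close>
lemma integral_le_log_integral:
  fixes f g :: "'a \<Rightarrow> real"
  assumes "prob_space M" and f: "integrable M f" and g: "g \<in> borel_measurable M"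
    and AE: "AE x in M. 1 \<le> f x \<and> 0 \<le> g x \<and> g x \<le> log 2 (f x)"
  shows "integrable M g" "integral\<^sup>L M g \<le> log 2 (integral\<^sup>L M f)"
proof -
  interpret prob_space M by fact
  define c where "c = integral\<^sup>L M f"
  have c: "1 \<le> c" unfolding c_def using AE f by (intro integral_ge_const) auto
  define B where "B = (\<lambda>x. log 2 c + (f x - c) / (c * ln 2))"
  have B: "integrable M B" unfolding B_def using f
    by (intro Bochner_Integration.integrable_add Bochner_Integration.integrable_diff integrable_divide)
      auto
  have "integral\<^sup>L M B = log 2 c + (integral\<^sup>L M f - c) / (c * ln 2)"
    unfolding B_def using f by (simp add: prob_space)
  then have IB: "integral\<^sup>L M B = log 2 c" unfolding c_def by simp
  have AEB: "AE x in M. 0 \<le> g x \<and> g x \<le> B x"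
    using AE
  proof eventually_elim
    case (elim x)
    then show ?case unfolding B_def using log_le_tangent[of "f x" c] c by auto
  qed
  show gi: "integrable M g"
    by (rule Bochner_Integration.integrable_bound[OF B g]) (use AEB in \<open>eventually_elim, auto\<close>)
  have "integral\<^sup>L M g \<le> integral\<^sup>L M B"
    by (rule integral_mono_AE[OF gi B]) (use AEB in \<open>eventually_elim, auto\<close>)
  then show "integral\<^sup>L M g \<le> log 2 (integral\<^sup>L M f)" using IB c_def by simp
qed

lemma distr_pair_snd:
  assumes "prob_space M1" "prob_space M2"
  shows "distr (M1 \<Otimes>\<^sub>M M2) M2 snd = M2"
proof (intro measure_eqI)
  interpret p1: prob_space M1 by fact
  interpret p2: prob_space M2 by fact
  fix A assume A: "A \<in> sets (distr (M1 \<Otimes>\<^sub>M M2) M2 snd)"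
  then have "emeasure (distr (M1 \<Otimes>\<^sub>M M2) M2 snd) A = emeasure (M1 \<Otimes>\<^sub>M M2) (space M1 \<times> A)"
    by (auto simp: emeasure_distr space_pair_measure dest: sets.sets_into_space
        intro!: arg_cong2[where f = emeasure])
  with A show "emeasure (distr (M1 \<Otimes>\<^sub>M M2) M2 snd) A = emeasure M2 A"
    by (simp add: p2.emeasure_pair_measure_Times p1.emeasure_space_1)
qed simp

lemma has_bochner_integral_pair_sum:
  fixes f g :: "_ \<Rightarrow> real"
  assumes M1: "prob_space M1" and M2: "prob_space M2"
    and f: "integrable M1 f" and g: "integrable M2 g"
  shows "has_bochner_integral (M1 \<Otimes>\<^sub>M M2) (\<lambda>z. f (fst z) + g (snd z))
    (integral\<^sup>L M1 f + integral\<^sup>L M2 g)"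
proof -
  interpret p2: prob_space M2 by fact
  have f': "f \<in> borel_measurable M1" and g': "g \<in> borel_measurable M2" using f g by auto
  have "has_bochner_integral (M1 \<Otimes>\<^sub>M M2) (\<lambda>z. f (fst z)) (integral\<^sup>L M1 f)"
    using integrable_distr_eq[OF measurable_fst[of M1 M2] f']
      integral_distr[OF measurable_fst[of M1 M2] f'] f
    by (simp add: has_bochner_integral_iff p2.distr_pair_fst)
  moreover have "has_bochner_integral (M1 \<Otimes>\<^sub>M M2) (\<lambda>z. g (snd z)) (integral\<^sup>L M2 g)"
    using integrable_distr_eq[OF measurable_snd[of M1 M2] g']
      integral_distr[OF measurable_snd[of M1 M2] g'] g
    by (simp add: has_bochner_integral_iff distr_pair_snd[OF M1 M2])
  ultimately show ?thesis by (rule has_bochner_integral_add)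
qed

lemma AE_pair_fst_snd:
  assumes M1: "prob_space M1" and M2: "prob_space M2"
    and "AE x in M1. P x" "AE y in M2. Q y"
  shows "AE z in M1 \<Otimes>\<^sub>M M2. P (fst z) \<and> Q (snd z)"
proof -
  interpret p2: prob_space M2 by fact
  have "AE z in M1 \<Otimes>\<^sub>M M2. P (fst z)"
    by (rule AE_distrD[OF measurable_fst]) (subst p2.distr_pair_fst, rule assms(3))
  moreover have "AE z in M1 \<Otimes>\<^sub>M M2. Q (snd z)"
    by (rule AE_distrD[OF measurable_snd]) (subst distr_pair_snd[OF M1 M2], rule assms(4))
  ultimately show ?thesis by eventually_elim auto
qed

section \<open>Exponentially distributed channel gains\<close>

lemma sets_exp_dist [measurable_cong]: "sets (exp_dist lam) = sets borel"
  unfolding exp_dist_def by simp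

lemma space_exp_dist [simp]: "space (exp_dist lam) = UNIV"
  unfolding exp_dist_def by simp

lemma prob_space_exp_dist: "lam > 0 \<Longrightarrow> prob_space (exp_dist lam)"
  unfolding exp_dist_def by (rule prob_space_exponential_density) simp

lemma AE_exp_dist_nonneg: "AE x in exp_dist lam. 0 \<le> x"
  unfolding exp_dist_def by (subst AE_density) (auto simp: exponential_density_def)

lemma measurable_alphaA [measurable (raw)]:
  assumes [measurable]: "f \<in> borel_measurable M" "g \<in> borel_measurable M"
  shows "(\<lambda>x. alphaA P (f x) (g x)) \<in> borel_measurable M"
  unfolding alphaA_def by measurable

lemma measurable_q_r [measurable (raw)]:
  assumes [measurable]: "f \<in> borel_measurable M"
  shows "(\<lambda>x. q_r Delta T (f x)) \<in> borel_measurable M"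
  unfolding q_r_def by measurable

lemma measurable_r_loss [measurable (raw)]:
  assumes [measurable]: "f \<in> borel_measurable M" "g \<in> borel_measurable M"
  shows "(\<lambda>x. r_loss P Delta T (f x) (g x)) \<in> borel_measurable M"
  unfolding r_loss_def r_max_def min_rate_q_def Let_def by measurable

lemma measurable_vle_len [measurable]: "vle_len Delta T \<in> borel_measurable borel"
  unfolding vle_len_def by measurable

lemma nn_integral_exponential_density_tail:
  assumes l: "l > 0" and t: "t \<ge> 0"
  shows "(\<integral>\<^sup>+ x. ennreal (exponential_density l x * max 0 (x - t)) \<partial>lborel)
    = ennreal (exp (- l * t) / l)"
proof -
  have "(\<integral>\<^sup>+ x. ennreal (exponential_density l x * max 0 (x - t)) \<partial>lborel)
      = ennreal \<bar>1\<bar> * (\<integral>\<^sup>+ x. ennreal (exponential_density l (t + 1 * x) * max 0 (t + 1 * x - t)) \<partial>lborel)"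
    by (rule nn_integral_real_affine) auto
  also have "\<dots> = (\<integral>\<^sup>+ x. ennreal (exponential_density l (t + x) * max 0 x) \<partial>lborel)"
    by simp
  also have "\<dots> = (\<integral>\<^sup>+ x. ennreal (exp (- l * t)) * ennreal (erlang_density 0 l x * x ^ 1) \<partial>lborel)"
    using t by (intro nn_integral_cong)
      (auto simp: erlang_density_def ennreal_mult'[symmetric] algebra_simps mult_exp_exp max_def)
  also have "\<dots> = ennreal (exp (- l * t)) * ennreal (1 / l)"
    using nn_integral_erlang_ith_moment[OF l, of 0 1] by (simp add: nn_integral_cmult)
  also have "\<dots> = ennreal (exp (- l * t) / l)"
    by (simp add: ennreal_mult'[symmetric])
  finally show ?thesis .
qed

lemma has_bochner_integral_exp_dist_tail:
  assumes l: "lam > 0" and t: "t \<ge> 0"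
  shows "has_bochner_integral (exp_dist lam) (\<lambda>x. max 0 (x - t)) (lam * exp (- t / lam))"
proof (rule has_bochner_integral_nn_integral)
  have "(\<integral>\<^sup>+ x. ennreal (max 0 (x - t)) \<partial>exp_dist lam)
      = (\<integral>\<^sup>+ x. ennreal (exponential_density (1 / lam) x) * ennreal (max 0 (x - t)) \<partial>lborel)"
    unfolding exp_dist_def by (rule nn_integral_density) auto
  also have "\<dots> = (\<integral>\<^sup>+ x. ennreal (exponential_density (1 / lam) x * max 0 (x - t)) \<partial>lborel)"
    using exponential_density_nonneg[of "1 / lam"] l by (intro nn_integral_cong) (simp add: ennreal_mult)
  also have "\<dots> = ennreal (lam * exp (- t / lam))"
    using nn_integral_exponential_density_tail[of "1 / lam" t] l t by (simp add: field_simps)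
  finally show "(\<integral>\<^sup>+ x. ennreal (max 0 (x - t)) \<partial>exp_dist lam) = ennreal (lam * exp (- t / lam))" .
qed (use l in auto)

lemma expected_vle_len_le:
  assumes lam: "lam > 0" and D: "Delta > 0" and T: "T \<ge> 0"
  shows "integrable (exp_dist lam) (vle_len Delta T)"
    "integral\<^sup>L (exp_dist lam) (vle_len Delta T) \<le> log 2 (lam / Delta + 2)"
proof -
  interpret prob_space "exp_dist lam" by (rule prob_space_exp_dist[OF lam])
  have f: "has_bochner_integral (exp_dist lam) (\<lambda>x. max 0 x / Delta + 2) (lam / Delta + 2)"
    using has_bochner_integral_exp_dist_tail[OF lam order_refl]
    by (intro has_bochner_integral_add has_bochner_integral_divide_zero)
      (simp_all add: has_bochner_integral_iff prob_space[unfolded space_exp_dist])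
  have AE: "AE x in exp_dist lam.
      1 \<le> max 0 x / Delta + 2 \<and> 0 \<le> vle_len Delta T x \<and> vle_len Delta T x \<le> log 2 (max 0 x / Delta + 2)"
    using AE_exp_dist_nonneg by eventually_elim (use vle_len_bounds[OF D T] D in auto)
  note Jensen = integral_le_log_integral[OF prob_space_exp_dist[OF lam] integrable.intros[OF f] _ AE]
  show "integrable (exp_dist lam) (vle_len Delta T)" by (rule Jensen) simp
  show "integral\<^sup>L (exp_dist lam) (vle_len Delta T) \<le> log 2 (lam / Delta + 2)"
    using Jensen(2) has_bochner_integral_integral_eq[OF f] by simp
qed

lemma expected_quantization_error_le:
  assumes lam: "lam > 0" and D: "Delta > 0" and T: "T \<ge> 0"
  shows "integrable (exp_dist lam) (\<lambda>x. x - q_r Delta T x)"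
    "integral\<^sup>L (exp_dist lam) (\<lambda>x. x - q_r Delta T x) \<le> Delta + lam * exp (- (T * Delta) / lam)"
    "AE x in exp_dist lam. 0 \<le> x - q_r Delta T x"
proof -
  interpret prob_space "exp_dist lam" by (rule prob_space_exp_dist[OF lam])
  have B: "has_bochner_integral (exp_dist lam) (\<lambda>x. Delta + max 0 (x - T * Delta))
      (Delta + lam * exp (- (T * Delta) / lam))"
    using T D by (intro has_bochner_integral_add has_bochner_integral_exp_dist_tail[OF lam])
      (simp_all add: has_bochner_integral_iff prob_space[unfolded space_exp_dist])
  have AE: "AE x in exp_dist lam. 0 \<le> x - q_r Delta T x \<and> x - q_r Delta T x \<le> Delta + max 0 (x - T * Delta)"
    using AE_exp_dist_nonneg by eventually_elim (use q_r_bounds[OF D T] in auto)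
  then show "AE x in exp_dist lam. 0 \<le> x - q_r Delta T x" by auto
  show di: "integrable (exp_dist lam) (\<lambda>x. x - q_r Delta T x)"
    by (rule Bochner_Integration.integrable_bound[OF integrable.intros[OF B]])
      (use AE in \<open>measurable, eventually_elim, use D in auto\<close>)
  have "integral\<^sup>L (exp_dist lam) (\<lambda>x. x - q_r Delta T x) \<le> integral\<^sup>L (exp_dist lam) (\<lambda>x. Delta + max 0 (x - T * Delta))"
    by (rule integral_mono_AE[OF di integrable.intros[OF B]]) (use AE in \<open>eventually_elim, auto\<close>)
  then show "integral\<^sup>L (exp_dist lam) (\<lambda>x. x - q_r Delta T x) \<le> Delta + lam * exp (- (T * Delta) / lam)"
    using has_bochner_integral_integral_eq[OF B] by simp
qed

lemma expected_r_loss_le: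
  assumes l1: "lam1 > 0" and l2: "lam2 > 0" and P: "P > 0" and D: "Delta > 0" and T: "T \<ge> 0"
  defines "d \<equiv> \<lambda>x. x - q_r Delta T x"
  shows "integrable (exp_dist lam1 \<Otimes>\<^sub>M exp_dist lam2) (\<lambda>(h1, h2). r_loss P Delta T h1 h2)"
    "integral\<^sup>L (exp_dist lam1 \<Otimes>\<^sub>M exp_dist lam2) (\<lambda>(h1, h2). r_loss P Delta T h1 h2)
      \<le> log 2 (1 + P * (integral\<^sup>L (exp_dist lam1) d + integral\<^sup>L (exp_dist lam2) d))"
proof -
  note M1 = prob_space_exp_dist[OF l1] and M2 = prob_space_exp_dist[OF l2]
  note d1 = expected_quantization_error_le[OF l1 D T, folded d_def]
    and d2 = expected_quantization_error_le[OF l2 D T, folded d_def]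
  interpret pair_prob_space "exp_dist lam1" "exp_dist lam2"
    by (intro pair_prob_space.intro pair_sigma_finite.intro M1 M2 prob_space_imp_sigma_finite)
  have f: "has_bochner_integral (exp_dist lam1 \<Otimes>\<^sub>M exp_dist lam2)
      (\<lambda>z. 1 + P * (d (fst z) + d (snd z)))
      (1 + P * (integral\<^sup>L (exp_dist lam1) d + integral\<^sup>L (exp_dist lam2) d))"
    by (intro has_bochner_integral_add has_bochner_integral_mult_right
        has_bochner_integral_pair_sum M1 M2 d1(1) d2(1))
      (simp add: has_bochner_integral_iff prob_space)
  have "AE z in exp_dist lam1 \<Otimes>\<^sub>M exp_dist lam2.
      (0 \<le> fst z \<and> 0 \<le> d (fst z)) \<and> (0 \<le> snd z \<and> 0 \<le> d (snd z))"
    using AE_conjI[OF AE_exp_dist_nonneg d1(3)] AE_conjI[OF AE_exp_dist_nonneg d2(3)]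
    unfolding d_def by (intro AE_pair_fst_snd M1 M2)
  then have AE: "AE z in exp_dist lam1 \<Otimes>\<^sub>M exp_dist lam2.
      1 \<le> 1 + P * (d (fst z) + d (snd z)) \<and> 0 \<le> (\<lambda>(h1, h2). r_loss P Delta T h1 h2) z \<and>
      (\<lambda>(h1, h2). r_loss P Delta T h1 h2) z \<le> log 2 (1 + P * (d (fst z) + d (snd z)))"
    by eventually_elim (use r_loss_bounds[OF P D T] P in \<open>auto simp: d_def case_prod_beta\<close>)
  note Jensen = integral_le_log_integral[OF P.prob_space_axioms integrable.intros[OF f] _ AE]
  show "integrable (exp_dist lam1 \<Otimes>\<^sub>M exp_dist lam2) (\<lambda>(h1, h2). r_loss P Delta T h1 h2)"
    by (rule Jensen) (simp add: case_prod_beta)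
  show "integral\<^sup>L (exp_dist lam1 \<Otimes>\<^sub>M exp_dist lam2) (\<lambda>(h1, h2). r_loss P Delta T h1 h2)
      \<le> log 2 (1 + P * (integral\<^sup>L (exp_dist lam1) d + integral\<^sup>L (exp_dist lam2) d))"
    using Jensen(2) has_bochner_integral_integral_eq[OF f] by (simp add: case_prod_beta')
qed

text \<open>The threshold \<open>T \<Delta> = lam1 ln (1/\<Delta>)\<close> makes the overload probability
  \<open>exp (- T \<Delta> / lam)\<close> of either channel at most \<open>\<Delta>\<close>.\<close>
lemma expected_quantization_error_threshold_le:
  assumes lam: "0 < lam" "lam \<le> lam1" and D: "0 < Delta" "Delta \<le> 1"
  defines "T \<equiv> lam1 / Delta * ln (1 / Delta)"
  shows "integral\<^sup>L (exp_dist lam) (\<lambda>x. x - q_r Delta T x) \<le> Delta * (1 + lam)"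
proof -
  have t: "T * Delta = lam1 * ln (1 / Delta)" unfolding T_def using D by simp
  have ln: "ln (1 / Delta) \<ge> 0" using D by simp
  then have T: "T \<ge> 0" unfolding T_def using lam D by simp
  have "ln (1 / Delta) \<le> lam1 * ln (1 / Delta) / lam"
    using mult_right_mono[OF lam(2) ln] lam by (simp add: le_divide_eq mult.commute)
  then have "exp (- (T * Delta) / lam) \<le> exp (- ln (1 / Delta))"
    unfolding t by simp
  also have "\<dots> = Delta" using D by (simp add: ln_div)
  finally have "lam * exp (- (T * Delta) / lam) \<le> lam * Delta" using lam by simp
  then show ?thesis
    using expected_quantization_error_le(2)[OF lam(1) D(1) T] by (simp add: algebra_simps)
qed

lemma expected_r_loss_threshold_le:
  assumes lam: "lam2 \<le> lam1" "0 < lam2" and D: "0 < Delta" "Delta \<le> 1" and P: "P > 0"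
  defines "T \<equiv> lam1 / Delta * ln (1 / Delta)"
  shows "integral\<^sup>L (exp_dist lam1 \<Otimes>\<^sub>M exp_dist lam2) (\<lambda>(h1, h2). r_loss P Delta T h1 h2)
    \<le> log 2 (1 + P * (Delta * (2 + lam1 + lam2)))"
proof -
  have l1: "lam1 > 0" using lam by simp
  have T: "T \<ge> 0" unfolding T_def using l1 D by simp
  let ?E = "\<lambda>lam. integral\<^sup>L (exp_dist lam) (\<lambda>x. x - q_r Delta T x)"
  have "?E lam1 + ?E lam2 \<le> Delta * (2 + lam1 + lam2)"
    using expected_quantization_error_threshold_le[OF l1 order_refl D]
      expected_quantization_error_threshold_le[OF lam(2,1) D]
    unfolding T_def by (simp add: algebra_simps)
  moreover have "0 \<le> ?E lam1" "0 \<le> ?E lam2"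
    using expected_quantization_error_le(3)[OF l1 D(1) T]
      expected_quantization_error_le(3)[OF lam(2) D(1) T]
    by (simp_all add: integral_nonneg_AE)
  ultimately have "log 2 (1 + P * (?E lam1 + ?E lam2)) \<le> log 2 (1 + P * (Delta * (2 + lam1 + lam2)))"
    using P by (intro log_mono add_left_mono mult_left_mono) (auto intro: add_pos_nonneg)
  then show ?thesis using expected_r_loss_le(2)[OF l1 lam(2) P D(1) T] by simp
qed

lemma expected_r_loss_le_vle_rate:
  assumes lam: "lam2 \<le> lam1" "0 < lam2" and D: "0 < Delta" "Delta \<le> 1" and P: "P > 0"
  defines "T \<equiv> lam1 / Delta * ln (1 / Delta)"
  shows "integral\<^sup>L (exp_dist lam1 \<Otimes>\<^sub>M exp_dist lam2) (\<lambda>(h1, h2). r_loss P Delta T h1 h2)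
    \<le> log 2 (1 + (2 + lam1 + lam2) * (lam1 + 2) * P * 2 powr - min
          (integral\<^sup>L (exp_dist lam1) (vle_len Delta T)) (integral\<^sup>L (exp_dist lam2) (vle_len Delta T)))"
proof -
  have l1: "lam1 > 0" using lam by simp
  have T: "T \<ge> 0" unfolding T_def using l1 D by simp
  define C where "C = (2 + lam1 + lam2) * (lam1 + 2)"
  define K where "K = 2 powr - min
    (integral\<^sup>L (exp_dist lam1) (vle_len Delta T)) (integral\<^sup>L (exp_dist lam2) (vle_len Delta T))"
  have "Delta / (lam1 + 2) \<le> K"
    using expected_vle_len_le(2)[OF l1 D(1) T] l1 D unfolding K_def
    by (intro two_powr_neg_ge) auto
  then have "P * C * (Delta / (lam1 + 2)) \<le> P * C * K"
    using P l1 lam unfolding C_def by (intro mult_left_mono) auto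
  moreover have "P * (Delta * (2 + lam1 + lam2)) = P * C * (Delta / (lam1 + 2))"
    unfolding C_def using l1 by simp
  ultimately have "P * (Delta * (2 + lam1 + lam2)) \<le> C * P * K" by (simp add: mult_ac)
  moreover have "0 \<le> P * (Delta * (2 + lam1 + lam2))" using P D l1 lam by simp
  ultimately have "log 2 (1 + P * (Delta * (2 + lam1 + lam2))) \<le> log 2 (1 + C * P * K)"
    by (intro log_mono) linarith+
  then show ?thesis
    using expected_r_loss_threshold_le[OF lam D P, folded T_def] unfolding C_def K_def by simp
qed

theorem theorem2:
  fixes lam1 lam2 :: real
  assumes "lam1 \<ge> lam2" and "lam2 > 0"
  shows "\<exists>C2 C3. C2 > 0 \<and> C3 > 0 \<and>
    (\<forall>Delta P. 0 < Delta \<and> Delta \<le> 1 \<and> P > 0 \<longrightarrow>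
      (let T = lam1 / Delta * ln (1 / Delta);
           R1 = integral\<^sup>L (exp_dist lam1) (vle_len Delta T);
           R2 = integral\<^sup>L (exp_dist lam2) (vle_len Delta T);
           M = exp_dist lam1 \<Otimes>\<^sub>M exp_dist lam2;
           L = (\<lambda>(h1, h2). r_loss P Delta T h1 h2)
       in integrable (exp_dist lam1) (vle_len Delta T) \<and>
          integrable (exp_dist lam2) (vle_len Delta T) \<and>
          integrable M L \<and>
          integral\<^sup>L M L \<le> log 2 (1 + C2 * P * 2 powr (- min R1 R2)) \<and>
          log 2 (1 + C2 * P * 2 powr (- min R1 R2)) \<le> C3 * P * 2 powr (- min R1 R2)))"
proof -
  have l1: "lam1 > 0" and l2: "lam2 > 0" using assms by auto
  define C2 where "C2 = (2 + lam1 + lam2) * (lam1 + 2)"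
  have C2: "C2 > 0" unfolding C2_def using l1 l2 by simp
  have T: "0 \<le> lam1 / Delta * ln (1 / Delta)" if "0 < Delta" "Delta \<le> 1" for Delta
    using l1 that by simp
  have log_le: "log 2 (1 + C2 * P * 2 powr r) \<le> C2 / ln 2 * P * 2 powr r" if "P > 0" for P r
    using log2_one_plus_le[of "C2 * P * 2 powr r"] C2 that by simp
  show ?thesis
    using C2 T log_le expected_vle_len_le(1)[OF l1] expected_vle_len_le(1)[OF l2]
      expected_r_loss_le(1)[OF l1 l2] expected_r_loss_le_vle_rate[OF assms, folded C2_def]
    by (intro exI[of _ C2] exI[of _ "C2 / ln 2"]) (auto simp: Let_def)
qed

end
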